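(* Let $(\mathcal{H},\mathbf{a})$ be a weighted arrangement in $\mathbb{CP}^n$ with all $a_H>0$. The following are equivalent: (i) $\sum_{H\supset L}a_H<\operatorname{codim}L$ for every $L\in\mathcal{L}_{\mathrm{irr}}$; (ii) the same inequality holds for every $L\in\mathcal{L}$; (iii) the same inequality holds for every non-empty proper linear subspace $L\subsetneq\mathbb{CP}^n$.
   Context: $\mathcal{H}$ is a finite set of distinct hyperplanes in $\mathbb{CP}^n$; $\mathcal{L}$ is the set of non-empty proper intersections of members of $\mathcal{H}$. For $L\in\mathcal{L}$, the localization $\mathcal{H}_L=\{H\in\mathcal{H}:L\subset H\}$. A splitting of an arrangement $\mathcal{K}$ is a decomposition $\mathcal{K}=\mathcal{K}_1\cup\mathcal{K}_2$ whose centres (intersections of members; $\mathbb{CP}^n$ for the empty collection) $T_1,T_2$ satisfy $T_1+T_2=\mathbb{CP}^n$ (projective span); it is non-trivial if both parts are non-empty; $\mathcal{K}$ is irreducible if it has no non-trivial splitting. $L\in\mathcal{L}$ is irreducible if $\mathcal{H}_L$ is irreducible, and $\mathcal{L}_{\mathrm{irr}}$ is the set of irreducible elements of $\mathcal{L}$. *)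

theory Defs
  imports "HOL-Analysis.Analysis"
begin

text \<open>CP^n is modelled as the projectivisation of the complex vector space complex^'N,
with CARD('N) = n+1. A projective linear subspace corresponds to a complex-linear
subspace V of complex^'N; it is non-empty iff V is not the zero subspace; the whole
space CP^n corresponds to UNIV.\<close>

type_synonym 'N cvec = "complex ^ 'N"

definition proj_subspace :: "'N::finite cvec set \<Rightarrow> bool" where
  "proj_subspace V \<longleftrightarrow> vec.subspace V \<and> V \<noteq> {0}"

definition proj_hyperplane :: "'N::finite cvec set \<Rightarrow> bool" where
  "proj_hyperplane H \<longleftrightarrow> vec.subspace H \<and> vec.dim H = CARD('N) - 1"

text \<open>Projective codimension: n - dim_proj L = CARD('N) - dim V.\<close>
definition codim :: "'N::finite cvec set \<Rightarrow> nat" where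
  "codim L = CARD('N) - vec.dim L"

text \<open>Centre of a collection (intersection of its members; whole space for the empty one).\<close>
definition centre :: "'N::finite cvec set set \<Rightarrow> 'N cvec set" where
  "centre K = \<Inter> K"

text \<open>Projective span of two subspaces = linear span of their union.\<close>
definition is_splitting :: "'N::finite cvec set set \<Rightarrow> 'N cvec set set \<Rightarrow> 'N cvec set set \<Rightarrow> bool" where
  "is_splitting K K1 K2 \<longleftrightarrow> K = K1 \<union> K2 \<and> K1 \<inter> K2 = {} \<and>
      vec.span (centre K1 \<union> centre K2) = UNIV"

definition irreducible_arr :: "'N::finite cvec set set \<Rightarrow> bool" where
  "irreducible_arr K \<longleftrightarrow> \<not> (\<exists>K1 K2. is_splitting K K1 K2 \<and> K1 \<noteq> {} \<and> K2 \<noteq> {})"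

definition intersections :: "'N::finite cvec set set \<Rightarrow> 'N cvec set set" where
  "intersections \<H> = {\<Inter> S | S. S \<subseteq> \<H> \<and> S \<noteq> {} \<and> \<Inter> S \<noteq> {0} \<and> \<Inter> S \<noteq> UNIV}"

definition localization :: "'N::finite cvec set set \<Rightarrow> 'N cvec set \<Rightarrow> 'N cvec set set" where
  "localization \<H> L = {H \<in> \<H>. L \<subseteq> H}"

definition irreducible_intersections :: "'N::finite cvec set set \<Rightarrow> 'N cvec set set" where
  "irreducible_intersections \<H> = {L \<in> intersections \<H>. irreducible_arr (localization \<H> L)}"

end

theory Submission
  imports Defs
begin

text \<open>(ii) \<Rightarrow> (iii): a proper subspace L may be replaced by the intersection M of the
hyperplanes containing it, which has the same localization and no larger codimension.
(i) \<Rightarrow> (ii): induction on the size of the localization.  A non-trivial splitting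
K1 \<union> K2 of the localization at L writes L as the intersection of the two centres T1, T2,
which are intersections with the strictly smaller localizations K1, K2; since
T1 + T2 is the whole space, codim (T1 \<inter> T2) = codim T1 + codim T2, so both sides of
the inequality are additive.\<close>

lemma dim_UNIV_cvec: "vec.dim (UNIV :: 'N::finite cvec set) = CARD('N)"
  by (simp add: card_cart_basis)

lemma dim_le_CARD: "vec.dim (S :: 'N::finite cvec set) \<le> CARD('N)"
  by (metis dim_UNIV_cvec subset_UNIV vec.dim_subset)

lemma codim_antimono:
  fixes S T :: "'N::finite cvec set"
  assumes "S \<subseteq> T"
  shows "codim T \<le> codim S"
  using vec.dim_subset[OF assms] by (simp add: codim_def)

lemma codim_pos:
  fixes L :: "'N::finite cvec set"
  assumes "vec.subspace L" "L \<noteq> UNIV"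
  shows "codim L > 0"
proof -
  have "vec.dim L \<noteq> CARD('N)"
  proof
    assume "vec.dim L = CARD('N)"
    then have "vec.span L = UNIV"
      using vec.dim_eq_full[of L] by (simp add: card_cart_basis vec.dimension_def)
    with assms vec.span_eq_iff[of L] show False by simp
  qed
  with dim_le_CARD[of L] show ?thesis unfolding codim_def by linarith
qed

lemma codim_Int_of_span_Un_UNIV:
  fixes T1 T2 :: "'N::finite cvec set"
  assumes "vec.subspace T1" "vec.subspace T2" "vec.span (T1 \<union> T2) = UNIV"
  shows "codim (T1 \<inter> T2) = codim T1 + codim T2"
proof -
  have "vec.span T1 = T1" "vec.span T2 = T2"
    using assms(1,2) by (simp_all add: vec.span_eq_iff)
  with vec.span_Un[of T1 T2] assms(3)
  have "{x + y |x y. x \<in> T1 \<and> y \<in> T2} = UNIV" by simp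
  with vec.dim_sums_Int[OF assms(1,2)]
  have "CARD('N) + vec.dim (T1 \<inter> T2) = vec.dim T1 + vec.dim T2"
    by (simp add: card_cart_basis)
  with dim_le_CARD[of T1] dim_le_CARD[of T2] show ?thesis
    unfolding codim_def by linarith
qed

lemma proj_hyperplane_ne_UNIV:
  assumes "proj_hyperplane (H :: 'N::finite cvec set)"
  shows "H \<noteq> UNIV"
proof
  assume "H = UNIV"
  with assms have "CARD('N) = CARD('N) - 1"
    by (simp add: proj_hyperplane_def card_cart_basis)
  moreover have "CARD('N) > 0" by simp
  ultimately show False by linarith
qed

lemma subspace_Inter_hyperplanes:
  assumes "\<forall>H\<in>K. proj_hyperplane (H :: 'N::finite cvec set)"
  shows "vec.subspace (\<Inter>K)"
  using assms by (auto intro: vec.subspace_Inter simp: proj_hyperplane_def)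

lemma localization_subset: "localization \<H> L \<subseteq> \<H>"
  by (auto simp: localization_def)

lemma localization_Inter_localization:
  "localization \<H> (\<Inter>(localization \<H> L)) = localization \<H> L"
  by (auto simp: localization_def)

lemma Inter_in_intersections:
  fixes \<H> :: "'N::finite cvec set set"
  assumes hyp: "\<forall>H\<in>\<H>. proj_hyperplane H"
    and K: "K \<subseteq> \<H>" "K \<noteq> {}"
    and L: "vec.subspace L" "L \<noteq> {0}" "L \<subseteq> \<Inter>K"
  shows "\<Inter>K \<in> intersections \<H>"
proof -
  have "\<Inter>K \<noteq> UNIV"
    using K hyp proj_hyperplane_ne_UNIV by blast
  moreover have "\<Inter>K \<noteq> {0}"
    using L vec.subspace_0 by blast
  ultimately show ?thesis
    using K unfolding intersections_def by blast
qed

lemma intersection_eq_Inter_localization: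
  fixes \<H> :: "'N::finite cvec set set"
  assumes "L \<in> intersections \<H>"
  shows "\<Inter>(localization \<H> L) = L"
proof -
  obtain S where S: "L = \<Inter>S" "S \<subseteq> \<H>"
    using assms by (auto simp: intersections_def)
  then have "S \<subseteq> localization \<H> L"
    by (auto simp: localization_def)
  with S show ?thesis
    by (auto simp: localization_def)
qed

lemma proper_proj_subspace_of_intersection:
  fixes \<H> :: "'N::finite cvec set set"
  assumes "\<forall>H\<in>\<H>. proj_hyperplane H" "L \<in> intersections \<H>"
  shows "proj_subspace L" "L \<noteq> UNIV"
proof -
  have "\<forall>H\<in>localization \<H> L. proj_hyperplane H"
    using assms(1) by (auto simp: localization_def)
  from subspace_Inter_hyperplanes[OF this]
  have "vec.subspace L"
    by (simp add: intersection_eq_Inter_localization[OF assms(2)])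
  with assms(2) show "proj_subspace L" "L \<noteq> UNIV"
    by (auto simp: proj_subspace_def intersections_def)
qed

lemma is_splitting_sym: "is_splitting K K1 K2 \<longleftrightarrow> is_splitting K K2 K1"
  by (auto simp: is_splitting_def Un_commute)

text \<open>No hyperplane of the localization contains both centres of a splitting,
since it would then contain their span, the whole space.\<close>

lemma localization_centre_of_splitting:
  fixes \<H> :: "'N::finite cvec set set"
  assumes hyp: "\<forall>H\<in>\<H>. proj_hyperplane H"
    and sp: "is_splitting (localization \<H> L) K1 K2"
  shows "localization \<H> (centre K1) = K1"
proof
  have U: "localization \<H> L = K1 \<union> K2"
    using sp by (simp add: is_splitting_def)
  then show "K1 \<subseteq> localization \<H> (centre K1)"
    by (auto simp: localization_def centre_def)
  show "localization \<H> (centre K1) \<subseteq> K1"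
  proof
    fix H assume H: "H \<in> localization \<H> (centre K1)"
    then have H\<H>: "H \<in> \<H>" and "centre K1 \<subseteq> H"
      by (auto simp: localization_def)
    have "H \<notin> K2"
    proof
      assume "H \<in> K2"
      with \<open>centre K1 \<subseteq> H\<close> have "centre K1 \<union> centre K2 \<subseteq> H"
        by (auto simp: centre_def)
      moreover have "vec.subspace H"
        using hyp H\<H> by (simp add: proj_hyperplane_def)
      ultimately have "vec.span (centre K1 \<union> centre K2) \<subseteq> H"
        by (rule vec.span_minimal)
      with sp have "H = UNIV"
        by (auto simp: is_splitting_def)
      with hyp H\<H> proj_hyperplane_ne_UNIV show False by blast
    qed
    moreover have "L \<subseteq> centre K1"
      using U by (auto simp: localization_def centre_def)
    ultimately show "H \<in> K1"
      using H U by (auto simp: localization_def)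
  qed
qed

lemma centre_of_splitting_in_intersections:
  fixes \<H> :: "'N::finite cvec set set"
  assumes hyp: "\<forall>H\<in>\<H>. proj_hyperplane H"
    and L: "L \<in> intersections \<H>"
    and sp: "is_splitting (localization \<H> L) K1 K2" "K1 \<noteq> {}"
  shows "centre K1 \<in> intersections \<H>"
proof -
  have U: "localization \<H> L = K1 \<union> K2"
    using sp by (simp add: is_splitting_def)
  then have "K1 \<subseteq> \<H>" "L \<subseteq> centre K1"
    by (auto simp: localization_def centre_def)
  with sp(2) proper_proj_subspace_of_intersection(1)[OF hyp L] show ?thesis
    unfolding centre_def proj_subspace_def by (intro Inter_in_intersections[OF hyp]) auto
qed

lemma sum_lt_codim_of_irreducible_bound:
  fixes \<H> :: "'N::finite cvec set set" and a :: "'N cvec set \<Rightarrow> real"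
  assumes fin: "finite \<H>" and hyp: "\<forall>H\<in>\<H>. proj_hyperplane H"
    and irr: "\<forall>L\<in>irreducible_intersections \<H>. (\<Sum>H\<in>localization \<H> L. a H) < real (codim L)"
    and L: "L \<in> intersections \<H>"
  shows "(\<Sum>H\<in>localization \<H> L. a H) < real (codim L)"
  using L
proof (induction "card (localization \<H> L)" arbitrary: L rule: less_induct)
  case less
  show ?case
  proof (cases "irreducible_arr (localization \<H> L)")
    case True
    with irr less.prems show ?thesis
      by (auto simp: irreducible_intersections_def)
  next
    case False
    then obtain K1 K2 where sp: "is_splitting (localization \<H> L) K1 K2"
      and ne: "K1 \<noteq> {}" "K2 \<noteq> {}"
      by (auto simp: irreducible_arr_def)
    with is_splitting_sym have sp': "is_splitting (localization \<H> L) K2 K1" by blast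
    have U: "localization \<H> L = K1 \<union> K2" and D: "K1 \<inter> K2 = {}"
      and span: "vec.span (centre K1 \<union> centre K2) = UNIV"
      using sp by (auto simp: is_splitting_def)
    have finL: "finite (localization \<H> L)"
      using fin localization_subset finite_subset by blast
    have bound: "(\<Sum>H\<in>K. a H) < real (codim (centre K))"
      if "is_splitting (localization \<H> L) K K'" "K \<noteq> {}" "K' \<noteq> {}" for K K'
    proof -
      have "localization \<H> L = K \<union> K'" "K \<inter> K' = {}"
        using that(1) by (auto simp: is_splitting_def)
      with that(3) finL have "card K < card (localization \<H> L)"
        by (intro psubset_card_mono) auto
      with less.hyps[of "centre K"]
        localization_centre_of_splitting[OF hyp that(1)]
        centre_of_splitting_in_intersections[OF hyp less.prems that(1,2)]
      show ?thesis by simp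
    qed
    have "L = centre K1 \<inter> centre K2"
      using intersection_eq_Inter_localization[OF less.prems] U by (auto simp: centre_def)
    moreover have "vec.subspace (centre K1)" "vec.subspace (centre K2)"
      using hyp U subspace_Inter_hyperplanes[of K1] subspace_Inter_hyperplanes[of K2]
      by (auto simp: centre_def localization_def)
    ultimately have "codim L = codim (centre K1) + codim (centre K2)"
      using codim_Int_of_span_Un_UNIV span by simp
    moreover have "(\<Sum>H\<in>localization \<H> L. a H) = (\<Sum>H\<in>K1. a H) + (\<Sum>H\<in>K2. a H)"
      using U D finL by (simp add: sum.union_disjoint)
    ultimately show ?thesis
      using bound[OF sp ne] bound[OF sp' ne(2,1)] by simp
  qed
qed

lemma sum_lt_codim_of_intersection_bound:
  fixes \<H> :: "'N::finite cvec set set" and a :: "'N cvec set \<Rightarrow> real"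
  assumes hyp: "\<forall>H\<in>\<H>. proj_hyperplane H"
    and bound: "\<forall>L\<in>intersections \<H>. (\<Sum>H\<in>localization \<H> L. a H) < real (codim L)"
    and L: "proj_subspace L" "L \<noteq> UNIV"
  shows "(\<Sum>H\<in>localization \<H> L. a H) < real (codim L)"
proof (cases "localization \<H> L = {}")
  case True
  with L codim_pos[of L] show ?thesis by (simp add: proj_subspace_def)
next
  case False
  define M where "M = \<Inter>(localization \<H> L)"
  have "L \<subseteq> M" by (auto simp: M_def localization_def)
  with L False have "M \<in> intersections \<H>"
    unfolding M_def proj_subspace_def
    by (intro Inter_in_intersections[OF hyp localization_subset]) auto
  with bound have "(\<Sum>H\<in>localization \<H> M. a H) < real (codim M)" by blast
  moreover have "localization \<H> M = localization \<H> L"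
    by (simp add: M_def localization_Inter_localization)
  moreover have "codim M \<le> codim L"
    using \<open>L \<subseteq> M\<close> by (rule codim_antimono)
  ultimately show ?thesis by simp
qed

theorem lemma2p17:
  fixes \<H> :: "'N::finite cvec set set" and a :: "'N cvec set \<Rightarrow> real"
  assumes "finite \<H>"
    and "\<forall>H\<in>\<H>. proj_hyperplane H"
    and "\<forall>H\<in>\<H>. a H > 0"
  shows "((\<forall>L\<in>irreducible_intersections \<H>. (\<Sum>H\<in>localization \<H> L. a H) < real (codim L))
           \<longleftrightarrow> (\<forall>L\<in>intersections \<H>. (\<Sum>H\<in>localization \<H> L. a H) < real (codim L)))
       \<and> ((\<forall>L\<in>intersections \<H>. (\<Sum>H\<in>localization \<H> L. a H) < real (codim L))
           \<longleftrightarrow> (\<forall>L. proj_subspace L \<and> L \<noteq> UNIV \<longrightarrow>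
                   (\<Sum>H\<in>localization \<H> L. a H) < real (codim L)))"
proof (intro conjI iffI)
  show "\<forall>L\<in>intersections \<H>. (\<Sum>H\<in>localization \<H> L. a H) < real (codim L)"
    if "\<forall>L\<in>irreducible_intersections \<H>. (\<Sum>H\<in>localization \<H> L. a H) < real (codim L)"
    using sum_lt_codim_of_irreducible_bound[OF assms(1,2) that] by blast
  show "\<forall>L\<in>irreducible_intersections \<H>. (\<Sum>H\<in>localization \<H> L. a H) < real (codim L)"
    if "\<forall>L\<in>intersections \<H>. (\<Sum>H\<in>localization \<H> L. a H) < real (codim L)"
    using that by (auto simp: irreducible_intersections_def)
  show "\<forall>L. proj_subspace L \<and> L \<noteq> UNIV \<longrightarrow> (\<Sum>H\<in>localization \<H> L. a H) < real (codim L)"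
    if "\<forall>L\<in>intersections \<H>. (\<Sum>H\<in>localization \<H> L. a H) < real (codim L)"
    using sum_lt_codim_of_intersection_bound[OF assms(2) that] by blast
  show "\<forall>L\<in>intersections \<H>. (\<Sum>H\<in>localization \<H> L. a H) < real (codim L)"
    if "\<forall>L. proj_subspace L \<and> L \<noteq> UNIV \<longrightarrow> (\<Sum>H\<in>localization \<H> L. a H) < real (codim L)"
    using that proper_proj_subspace_of_intersection[OF assms(2)] by blast
qed

end
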